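(* Let $\mathcal{A}\subseteq\{1,\dots,T,+\infty\}$ be a finite set of adoption cohorts (ordered with $+\infty$ largest), let $\pi_a>0$ for $a\in\mathcal{A}$, and let real numbers $Y_{a,t}$ ($a\in\mathcal{A}$, $t\in\{1,\dots,T\}$), vectors $\theta_a\in\mathbb{R}^r$ ($a\in\mathcal{A}$) and $\psi_t\in\mathbb{R}^r$ ($t\in\{1,\dots,T\}$) be given. Consider the weighted least squares problem $$\min_{\{\alpha_a,\beta_t,\phi_t,\nu_a,\tau_{a,k}\}}\ \sum_{a\in\mathcal{A}}\sum_{t=1}^T \pi_a\Big(Y_{a,t}-\alpha_a-\beta_t-\theta_a^\top\phi_t-\nu_a^\top\psi_t-\mathbf{1}\{a\le t\}\tau_{a,t-a}\Big)^2,$$ over $\alpha_a\in\mathbb{R}$, $\beta_t\in\mathbb{R}$, $\phi_t\in\mathbb{R}^r$, $\nu_a\in\mathbb{R}^r$ and $\tau_{a,k}\in\mathbb{R}$ (one parameter for each $a\in\mathcal{A}$, $k\ge 0$ with $a+k\le T$), and denote by $\hat\tau^{OLS}_{a,k}$ the $\tau_{a,k}$-component of a minimizer. Suppose there exist periods $a^\star\ge t^\star$ such that the set $\{\theta_j: j\in\mathcal{A}, j>a^\star\}$ and the set $\{\psi_l: l<t^\star\}$ each affinely span $\mathbb{R}^r$. Then for every cohort $a$ and horizon $k\ge0$ with $t^\star\le a+k\le a^\star$, $\hat\tau^{OLS}_{a,k}$ is uniquely determined (the same for all minimizers), and it equals the value produced by the following sequential algorithm (Sequential OLS): for $k=0,1,\dots,a^\star-t^\star$,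 and within each $k$ for $a=t^\star,\dots,a^\star-k$ in increasing order (with $a\in\mathcal{A}$), do: (i) compute $$\tilde\omega^{(a)}:=\arg\min_{\omega}\sum_{j>a}\frac{\omega_j^2}{\pi_j}\ \text{ s.t. }\ \sum_{j>a}\omega_j=1,\ \sum_{j>a}\theta_j\omega_j=\theta_a,$$ $$\tilde\lambda^{(a,k)}:=\arg\min_{\lambda}\sum_{l<a+k}\lambda_l^2\ \text{ s.t. }\ \sum_{l<a+k}\lambda_l=1,\ \sum_{l<a+k}\lambda_l\psi_l=\psi_{a+k},$$ where $j$ ranges over cohorts in $\mathcal{A}$ with $j>a$ and $l$ over periods in $\{1,\dots,T\}$ with $l<a+k$; (ii) set $$\hat\tau^{OLS}_{a,k}:=\Big(Y_{a,a+k}-\sum_{j>a}\tilde\omega^{(a)}_jY_{j,a+k}\Big)-\sum_{l<a+k}\tilde\lambda^{(a,k)}_l\Big(Y_{a,l}-\sum_{j>a}\tilde\omega^{(a)}_jY_{j,l}\Big);$$ (iii) overwrite $Y_{a,a+k}:=Y_{a,a+k}-\hat\tau^{OLS}_{a,k}$ and use the updated data in all subsequent iterations.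
   Context: Here $\mathcal{A}$ plays the role of the set of observed adoption times (cohorts), $a=+\infty$ denoting the never-treated cohort, $Y_{a,t}$ is the average outcome of units in cohort $a$ in period $t$, and $\pi_a=n_a/n$ is the share of units in cohort $a$. The vectors $\theta_a$ (cohort factor loadings) and $\psi_t$ (time factors) are treated as known regressors ("oracle"). In the minimization, $\tau_{a,t-a}$ is the treatment effect of cohort $a$ at horizon $t-a$, present only when $a\le t$. *)

theory Defs
  imports "HOL-Analysis.Analysis" "HOL-Library.Extended_Nat"
begin

text \<open>Cohorts are elements of enat: finite adoption periods enat a (1 <= a <= T)
  and the never-treated cohort infinity. Periods are naturals 1..T.
  Vectors in R^r are elements of real^'r.\<close>

definition ssr ::
  "enat set \<Rightarrow> nat \<Rightarrow> (enat \<Rightarrow> real) \<Rightarrow> (enat \<Rightarrow> nat \<Rightarrow> real)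
   \<Rightarrow> (enat \<Rightarrow> real^'r) \<Rightarrow> (nat \<Rightarrow> real^'r)
   \<Rightarrow> (enat \<Rightarrow> real) \<Rightarrow> (nat \<Rightarrow> real) \<Rightarrow> (nat \<Rightarrow> real^'r) \<Rightarrow> (enat \<Rightarrow> real^'r)
   \<Rightarrow> (enat \<Rightarrow> nat \<Rightarrow> real) \<Rightarrow> real" where
  "ssr A T \<pi> Y \<theta> \<psi> \<alpha> \<beta> \<phi> \<nu> \<tau> =
    (\<Sum>a\<in>A. \<Sum>t=1..T. \<pi> a *
       (Y a t - \<alpha> a - \<beta> t - \<theta> a \<bullet> \<phi> t - \<nu> a \<bullet> \<psi> t
        - (if a \<le> enat t then \<tau> a (t - the_enat a) else 0))\<^sup>2)"

definition is_ols_minimizer ::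
  "enat set \<Rightarrow> nat \<Rightarrow> (enat \<Rightarrow> real) \<Rightarrow> (enat \<Rightarrow> nat \<Rightarrow> real)
   \<Rightarrow> (enat \<Rightarrow> real^'r) \<Rightarrow> (nat \<Rightarrow> real^'r)
   \<Rightarrow> (enat \<Rightarrow> real) \<Rightarrow> (nat \<Rightarrow> real) \<Rightarrow> (nat \<Rightarrow> real^'r) \<Rightarrow> (enat \<Rightarrow> real^'r)
   \<Rightarrow> (enat \<Rightarrow> nat \<Rightarrow> real) \<Rightarrow> bool" where
  "is_ols_minimizer A T \<pi> Y \<theta> \<psi> \<alpha> \<beta> \<phi> \<nu> \<tau> \<longleftrightarrow>
    (\<forall>\<alpha>' \<beta>' \<phi>' \<nu>' \<tau>'. ssr A T \<pi> Y \<theta> \<psi> \<alpha> \<beta> \<phi> \<nu> \<tau> \<le> ssr A T \<pi> Y \<theta> \<psi> \<alpha>' \<beta>' \<phi>' \<nu>' \<tau>')"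

definition argmin_on :: "('x \<Rightarrow> real) \<Rightarrow> 'x set \<Rightarrow> 'x" where
  "argmin_on f S = (THE x. x \<in> S \<and> (\<forall>y\<in>S. f x \<le> f y))"

definition omega_tilde ::
  "enat set \<Rightarrow> (enat \<Rightarrow> real) \<Rightarrow> (enat \<Rightarrow> real^'r) \<Rightarrow> nat \<Rightarrow> enat \<Rightarrow> real" where
  "omega_tilde A \<pi> \<theta> a =
    (let J = {j\<in>A. enat a < j} in
     argmin_on (\<lambda>\<omega>. \<Sum>j\<in>J. (\<omega> j)\<^sup>2 / \<pi> j)
       {\<omega>. (\<forall>j. j \<notin> J \<longrightarrow> \<omega> j = 0) \<and> (\<Sum>j\<in>J. \<omega> j) = 1
            \<and> (\<Sum>j\<in>J. \<omega> j *\<^sub>R \<theta> j) = \<theta> (enat a)})"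

text \<open>Time weights lambda-tilde^(a,k), with s = a + k: indexed by periods
  l in {1..T} with l < s (set to 0 elsewhere).\<close>
definition lambda_tilde :: "(nat \<Rightarrow> real^'r) \<Rightarrow> nat \<Rightarrow> nat \<Rightarrow> real" where
  "lambda_tilde \<psi> s =
    (let L = {1..<s} in
     argmin_on (\<lambda>w. \<Sum>l\<in>L. (w l)\<^sup>2)
       {w. (\<forall>l. l \<notin> L \<longrightarrow> w l = 0) \<and> (\<Sum>l\<in>L. w l) = 1
            \<and> (\<Sum>l\<in>L. w l *\<^sub>R \<psi> l) = \<psi> s})"

definition tau_step ::
  "enat set \<Rightarrow> (enat \<Rightarrow> real) \<Rightarrow> (enat \<Rightarrow> real^'r) \<Rightarrow> (nat \<Rightarrow> real^'r)
   \<Rightarrow> (enat \<Rightarrow> nat \<Rightarrow> real) \<Rightarrow> nat \<Rightarrow> nat \<Rightarrow> real" where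
  "tau_step A \<pi> \<theta> \<psi> Y a k =
    (let J = {j\<in>A. enat a < j}; L = {1..<a+k};
         \<omega> = omega_tilde A \<pi> \<theta> a; lam = lambda_tilde \<psi> (a+k) in
     (Y (enat a) (a+k) - (\<Sum>j\<in>J. \<omega> j * Y j (a+k)))
     - (\<Sum>l\<in>L. lam l * (Y (enat a) l - (\<Sum>j\<in>J. \<omega> j * Y j l))))"

definition seq_steps :: "enat set \<Rightarrow> nat \<Rightarrow> nat \<Rightarrow> (nat \<times> nat) list" where
  "seq_steps A t_star a_star =
     concat (map (\<lambda>k. map (\<lambda>a. (a, k)) (filter (\<lambda>a. enat a \<in> A) [t_star..<a_star - k + 1]))
                 [0..<a_star - t_star + 1])"

text \<open>Sequential OLS: runs the steps, overwriting Y(a,a+k) by Y(a,a+k) - tau,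
  and returns the computed estimates (0 for pairs not visited).\<close>
definition seq_ols ::
  "enat set \<Rightarrow> (enat \<Rightarrow> real) \<Rightarrow> (enat \<Rightarrow> nat \<Rightarrow> real) \<Rightarrow> (enat \<Rightarrow> real^'r)
   \<Rightarrow> (nat \<Rightarrow> real^'r) \<Rightarrow> nat \<Rightarrow> nat \<Rightarrow> enat \<Rightarrow> nat \<Rightarrow> real" where
  "seq_ols A \<pi> Y \<theta> \<psi> t_star a_star =
     snd (foldl (\<lambda>(Yc, tc) (a, k).
                   let t = tau_step A \<pi> \<theta> \<psi> Yc a k in
                   (Yc(enat a := (Yc (enat a))(a + k := Yc (enat a) (a + k) - t)),
                    tc(enat a := (tc (enat a))(k := t))))
                (Y, \<lambda>_ _. 0) (seq_steps A t_star a_star))"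

end

(*
  At an OLS minimiser the residuals vanish on treated cells, since every such cell has its own
  free parameter; the normal equations for the period parameters make each residual column
  pi-orthogonal to every affine function c0 + c . theta of the cohort loadings, and those for the
  cohort parameters make each residual row orthogonal to every affine function of the time
  factors. Minimum-norm weights under affine constraints have exactly this affine form:
  omega_j = pi_j (u0 + u . theta_j) and lambda_l = v0 + v . psi_l (Lagrange conditions).
  The step estimate is a double contrast (cohort a against the omega-average of later cohorts,
  period a+k against the lambda-average of earlier periods). It annihilates the fitted part,
  because omega and lambda reproduce the constant and the factors, and it annihilates the
  residuals by the two orthogonality relations. Once the effects estimated earlier have been
  subtracted, the only treated cell left inside the contrast is (a, a+k) itself, so each step
  returns the OLS value; induction along the order of the algorithm concludes.
*)
theory Submission
  imports Defs "HOL-Library.Product_Plus"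
begin

section \<open>Minimum-norm affine weights\<close>

definition affine_weights :: "'j set \<Rightarrow> ('j \<Rightarrow> 'v::real_vector) \<Rightarrow> 'v \<Rightarrow> ('j \<Rightarrow> real) set" where
  "affine_weights J x y =
     {w. (\<forall>j. j \<notin> J \<longrightarrow> w j = 0) \<and> (\<Sum>j\<in>J. w j) = 1 \<and> (\<Sum>j\<in>J. w j *\<^sub>R x j) = y}"

lemma argmin_on_eqI:
  assumes "x \<in> S" and "\<And>y. y \<in> S \<Longrightarrow> f x \<le> f y" and "\<And>y. y \<in> S \<Longrightarrow> f y \<le> f x \<Longrightarrow> y = x"
  shows "argmin_on f S = x"
  unfolding argmin_on_def using assms by (intro the_equality) auto

lemma affine_weights_linear_form_exists:
  fixes x :: "'j \<Rightarrow> 'v::euclidean_space"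
  assumes fin: "finite J" and pos: "\<forall>j\<in>J. p j > 0" and y: "y \<in> affine hull (x ` J)"
  obtains c0 c where "(\<lambda>j. if j \<in> J then p j * (c0 + c \<bullet> x j) else 0) \<in> affine_weights J x y"
proof -
  define G :: "real \<times> 'v \<Rightarrow> real \<times> 'v" where
    "G z = (\<Sum>j\<in>J. (p j * (fst z + snd z \<bullet> x j)) *\<^sub>R (1, x j))" for z
  have "linear G"
    by (rule linearI)
      (simp_all add: G_def sum.distrib[symmetric] scaleR_sum_right algebra_simps)
  have quadratic_form: "z \<bullet> G z = (\<Sum>j\<in>J. p j * (fst z + snd z \<bullet> x j)\<^sup>2)" for z
    unfolding G_def inner_sum_right
    by (intro sum.cong refl) (cases z, simp add: power2_eq_square algebra_simps)
  txt \<open>A vector orthogonal to the range of \<open>G\<close> is orthogonal to every \<open>(1, x j)\<close>,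
    hence to \<open>(1, y)\<close>; so \<open>(1, y)\<close> lies in the range of \<open>G\<close>.\<close>
  obtain g z where g: "g \<in> span (range G)" and z: "\<And>w. w \<in> span (range G) \<Longrightarrow> orthogonal z w"
    and decomp: "(1, y) = g + z"
    using orthogonal_subspace_decomp_exists by blast
  have "z \<bullet> G z = 0" using z[of "G z"] by (simp add: span_base orthogonal_def)
  with pos fin have "\<forall>j\<in>J. fst z + snd z \<bullet> x j = 0"
    by (fastforce simp: quadratic_form sum_nonneg_eq_0_iff less_imp_le)
  hence "x ` J \<subseteq> {v. snd z \<bullet> v = - fst z}" by (auto simp: algebra_simps)
  hence "affine hull (x ` J) \<subseteq> {v. snd z \<bullet> v = - fst z}"
    by (rule hull_minimal) (rule affine_hyperplane)
  with y have "z \<bullet> (1, y) = 0" by (cases z) auto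
  moreover have "z \<bullet> g = 0" using z[OF g] by (simp add: orthogonal_def)
  ultimately have "z = 0" using decomp by (simp add: inner_add_right)
  with decomp g have "(1, y) \<in> range G"
    using span_linear_image[OF \<open>linear G\<close>, of UNIV] by simp
  then obtain c0 c where "G (c0, c) = (1, y)" by (metis rangeE prod.collapse)
  hence "fst (G (c0, c)) = 1" and "snd (G (c0, c)) = y" by simp_all
  hence "(\<Sum>j\<in>J. p j * (c0 + c \<bullet> x j)) = 1" and "(\<Sum>j\<in>J. (p j * (c0 + c \<bullet> x j)) *\<^sub>R x j) = y"
    by (simp_all add: G_def fst_sum snd_sum)
  hence "(\<lambda>j. if j \<in> J then p j * (c0 + c \<bullet> x j) else 0) \<in> affine_weights J x y"
    by (simp add: affine_weights_def)
  thus thesis by (rule that)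
qed

lemma argmin_on_min_norm_affine_weights_eqI:
  fixes x :: "'j \<Rightarrow> 'v::real_inner"
  assumes fin: "finite J" and pos: "\<forall>j\<in>J. p j > 0"
    and w0: "w0 \<in> affine_weights J x y" and linear_form: "\<forall>j\<in>J. w0 j = p j * (c0 + c \<bullet> x j)"
  shows "argmin_on (\<lambda>w. \<Sum>j\<in>J. (w j)\<^sup>2 / p j) (affine_weights J x y) = w0"
proof -
  let ?F = "\<lambda>w. \<Sum>j\<in>J. (w j)\<^sup>2 / p j"
  have pythagoras: "?F w = ?F w0 + (\<Sum>j\<in>J. (w j - w0 j)\<^sup>2 / p j)" if w: "w \<in> affine_weights J x y" for w
  proof -
    have "(\<Sum>j\<in>J. (w j - w0 j) * (c0 + c \<bullet> x j))
        = c0 * ((\<Sum>j\<in>J. w j) - (\<Sum>j\<in>J. w0 j)) + c \<bullet> ((\<Sum>j\<in>J. w j *\<^sub>R x j) - (\<Sum>j\<in>J. w0 j *\<^sub>R x j))"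
      by (simp add: algebra_simps sum.distrib sum_subtractf sum_distrib_left inner_sum_right)
    also have "\<dots> = 0" using w w0 by (simp add: affine_weights_def)
    finally have cross: "(\<Sum>j\<in>J. (w j - w0 j) * (c0 + c \<bullet> x j)) = 0" .
    have "?F w = (\<Sum>j\<in>J. (w0 j)\<^sup>2 / p j + (w j - w0 j)\<^sup>2 / p j + 2 * ((w j - w0 j) * (c0 + c \<bullet> x j)))"
    proof (intro sum.cong refl)
      fix j assume "j \<in> J"
      with pos linear_form have "p j > 0" and "w0 j = p j * (c0 + c \<bullet> x j)" by auto
      thus "(w j)\<^sup>2 / p j = (w0 j)\<^sup>2 / p j + (w j - w0 j)\<^sup>2 / p j + 2 * ((w j - w0 j) * (c0 + c \<bullet> x j))"
        by (simp add: field_simps power2_eq_square)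
    qed
    also have "\<dots> = ?F w0 + (\<Sum>j\<in>J. (w j - w0 j)\<^sup>2 / p j)"
      using cross by (simp add: sum.distrib sum_distrib_left[symmetric])
    finally show ?thesis .
  qed
  have dist_nonneg: "(\<Sum>j\<in>J. (w j - w0 j)\<^sup>2 / p j) \<ge> 0" for w
    using pos by (intro sum_nonneg) (simp add: less_imp_le)
  show ?thesis
  proof (rule argmin_on_eqI[OF w0])
    fix w assume "w \<in> affine_weights J x y"
    thus "?F w0 \<le> ?F w" using pythagoras[of w] dist_nonneg[of w] by linarith
  next
    fix w assume w: "w \<in> affine_weights J x y" and "?F w \<le> ?F w0"
    hence "(\<Sum>j\<in>J. (w j - w0 j)\<^sup>2 / p j) = 0" using pythagoras[OF w] dist_nonneg[of w] by linarith
    hence "\<forall>j\<in>J. w j = w0 j" using fin pos by (fastforce simp: sum_nonneg_eq_0_iff less_imp_le)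
    moreover have "\<forall>j. j \<notin> J \<longrightarrow> w j = w0 j" using w w0 by (simp add: affine_weights_def)
    ultimately show "w = w0" by blast
  qed
qed

lemma argmin_on_min_norm_affine_weights_linear_form:
  fixes x :: "'j \<Rightarrow> 'v::euclidean_space"
  assumes "finite J" and "\<forall>j\<in>J. p j > 0" and "y \<in> affine hull (x ` J)"
  obtains c0 c
  where "argmin_on (\<lambda>w. \<Sum>j\<in>J. (w j)\<^sup>2 / p j) (affine_weights J x y) \<in> affine_weights J x y"
    and "\<forall>j\<in>J. argmin_on (\<lambda>w. \<Sum>j\<in>J. (w j)\<^sup>2 / p j) (affine_weights J x y) j = p j * (c0 + c \<bullet> x j)"
proof -
  obtain c0 c where w0: "(\<lambda>j. if j \<in> J then p j * (c0 + c \<bullet> x j) else 0) \<in> affine_weights J x y"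
    using affine_weights_linear_form_exists assms by blast
  have "argmin_on (\<lambda>w. \<Sum>j\<in>J. (w j)\<^sup>2 / p j) (affine_weights J x y)
      = (\<lambda>j. if j \<in> J then p j * (c0 + c \<bullet> x j) else 0)"
    by (rule argmin_on_min_norm_affine_weights_eqI[OF assms(1,2) w0, of c0 c]) simp
  with w0 show thesis by (intro that[of c0 c]) auto
qed

lemma omega_tilde_linear_form:
  assumes "finite A" and "\<forall>j\<in>A. \<pi> j > 0"
    and "\<theta> (enat a) \<in> affine hull (\<theta> ` {j\<in>A. enat a < j})"
  obtains u0 u where "omega_tilde A \<pi> \<theta> a \<in> affine_weights {j\<in>A. enat a < j} \<theta> (\<theta> (enat a))"
    and "\<forall>j\<in>{j\<in>A. enat a < j}. omega_tilde A \<pi> \<theta> a j = \<pi> j * (u0 + u \<bullet> \<theta> j)"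
proof -
  have "omega_tilde A \<pi> \<theta> a
      = argmin_on (\<lambda>w. \<Sum>j\<in>{j\<in>A. enat a < j}. (w j)\<^sup>2 / \<pi> j)
          (affine_weights {j\<in>A. enat a < j} \<theta> (\<theta> (enat a)))"
    by (simp add: omega_tilde_def affine_weights_def Let_def)
  thus thesis
    using argmin_on_min_norm_affine_weights_linear_form[of "{j\<in>A. enat a < j}" \<pi>] assms that by auto
qed

lemma lambda_tilde_linear_form:
  assumes "\<psi> s \<in> affine hull (\<psi> ` {1..<s})"
  obtains v0 v where "lambda_tilde \<psi> s \<in> affine_weights {1..<s} \<psi> (\<psi> s)"
    and "\<forall>l\<in>{1..<s}. lambda_tilde \<psi> s l = v0 + v \<bullet> \<psi> l"
proof -
  have "lambda_tilde \<psi> s = argmin_on (\<lambda>w. \<Sum>l\<in>{1..<s}. (w l)\<^sup>2 / 1) (affine_weights {1..<s} \<psi> (\<psi> s))"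
    by (simp add: lambda_tilde_def affine_weights_def Let_def)
  thus thesis
    using argmin_on_min_norm_affine_weights_linear_form[of "{1..<s}" "\<lambda>_. 1"] assms that by auto
qed

section \<open>The factor model and the step contrast\<close>

definition fitted ::
  "(enat \<Rightarrow> real^'r) \<Rightarrow> (nat \<Rightarrow> real^'r) \<Rightarrow> (enat \<Rightarrow> real) \<Rightarrow> (nat \<Rightarrow> real)
   \<Rightarrow> (nat \<Rightarrow> real^'r) \<Rightarrow> (enat \<Rightarrow> real^'r) \<Rightarrow> enat \<Rightarrow> nat \<Rightarrow> real" where
  "fitted \<theta> \<psi> \<alpha> \<beta> \<phi> \<nu> a t = \<alpha> a + \<beta> t + \<theta> a \<bullet> \<phi> t + \<nu> a \<bullet> \<psi> t"

definition treatment_effect :: "(enat \<Rightarrow> nat \<Rightarrow> real) \<Rightarrow> enat \<Rightarrow> nat \<Rightarrow> real" where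
  "treatment_effect \<tau> a t = (if a \<le> enat t then \<tau> a (t - the_enat a) else 0)"

definition residual ::
  "(enat \<Rightarrow> nat \<Rightarrow> real) \<Rightarrow> (enat \<Rightarrow> real^'r) \<Rightarrow> (nat \<Rightarrow> real^'r) \<Rightarrow> (enat \<Rightarrow> real)
   \<Rightarrow> (nat \<Rightarrow> real) \<Rightarrow> (nat \<Rightarrow> real^'r) \<Rightarrow> (enat \<Rightarrow> real^'r) \<Rightarrow> (enat \<Rightarrow> nat \<Rightarrow> real)
   \<Rightarrow> enat \<Rightarrow> nat \<Rightarrow> real" where
  "residual Y \<theta> \<psi> \<alpha> \<beta> \<phi> \<nu> \<tau> a t = Y a t - fitted \<theta> \<psi> \<alpha> \<beta> \<phi> \<nu> a t - treatment_effect \<tau> a t"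

lemma ssr_eq_sum_residual:
  "ssr A T \<pi> Y \<theta> \<psi> \<alpha> \<beta> \<phi> \<nu> \<tau> = (\<Sum>a\<in>A. \<Sum>t=1..T. \<pi> a * (residual Y \<theta> \<psi> \<alpha> \<beta> \<phi> \<nu> \<tau> a t)\<^sup>2)"
  unfolding ssr_def residual_def fitted_def treatment_effect_def by (simp add: algebra_simps)

lemma residual_perturb:
  "residual Y \<theta> \<psi> (\<lambda>a. \<alpha> a + e * \<alpha>' a) (\<lambda>t. \<beta> t + e * \<beta>' t) (\<lambda>t. \<phi> t + e *\<^sub>R \<phi>' t)
     (\<lambda>a. \<nu> a + e *\<^sub>R \<nu>' a) (\<lambda>a h. \<tau> a h + e * \<tau>' a h) a t
   = residual Y \<theta> \<psi> \<alpha> \<beta> \<phi> \<nu> \<tau> a t - e * (fitted \<theta> \<psi> \<alpha>' \<beta>' \<phi>' \<nu>' a t + treatment_effect \<tau>' a t)"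
  by (simp add: residual_def fitted_def treatment_effect_def algebra_simps)

lemma treatment_effect_single_cell:
  assumes "a \<le> enat t"
  shows "treatment_effect (\<lambda>b h. if b = a \<and> h = t - the_enat a then 1 else 0) b t'
    = (if b = a \<and> t' = t then 1 else 0)"
  using assms by (cases a) (auto simp: treatment_effect_def)

definition cohort_contrast ::
  "enat set \<Rightarrow> (enat \<Rightarrow> real) \<Rightarrow> (enat \<Rightarrow> real^'r) \<Rightarrow> (enat \<Rightarrow> nat \<Rightarrow> real) \<Rightarrow> nat \<Rightarrow> nat \<Rightarrow> real" where
  "cohort_contrast A \<pi> \<theta> Z a t =
     Z (enat a) t - (\<Sum>j\<in>{j\<in>A. enat a < j}. omega_tilde A \<pi> \<theta> a j * Z j t)"

lemma tau_step_eq_cohort_contrast: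
  "tau_step A \<pi> \<theta> \<psi> Z a k =
     cohort_contrast A \<pi> \<theta> Z a (a + k)
     - (\<Sum>l\<in>{1..<a + k}. lambda_tilde \<psi> (a + k) l * cohort_contrast A \<pi> \<theta> Z a l)"
  by (simp add: tau_step_def cohort_contrast_def Let_def)

lemma tau_step_add:
  "tau_step A \<pi> \<theta> \<psi> (\<lambda>b t. Z b t + Z' b t) a k = tau_step A \<pi> \<theta> \<psi> Z a k + tau_step A \<pi> \<theta> \<psi> Z' a k"
proof -
  have "cohort_contrast A \<pi> \<theta> (\<lambda>b t. Z b t + Z' b t) a t
      = cohort_contrast A \<pi> \<theta> Z a t + cohort_contrast A \<pi> \<theta> Z' a t" for t
    by (simp add: cohort_contrast_def sum.distrib algebra_simps)
  thus ?thesis by (simp add: tau_step_eq_cohort_contrast sum.distrib algebra_simps)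
qed

lemma tau_step_cong:
  assumes "1 \<le> a + k"
    and "\<And>b t. b \<in> insert (enat a) {j\<in>A. enat a < j} \<Longrightarrow> t \<in> {1..a + k} \<Longrightarrow> Z b t = Z' b t"
  shows "tau_step A \<pi> \<theta> \<psi> Z a k = tau_step A \<pi> \<theta> \<psi> Z' a k"
  using assms by (simp add: tau_step_def Let_def)

lemma tau_step_single_cell:
  "tau_step A \<pi> \<theta> \<psi> (\<lambda>b t. if b = enat a \<and> t = a + k then c else 0) a k = c"
proof -
  have "cohort_contrast A \<pi> \<theta> (\<lambda>b t. if b = enat a \<and> t = a + k then c else 0) a t
      = (if t = a + k then c else 0)" for t
    unfolding cohort_contrast_def by (auto intro!: sum.neutral)
  thus ?thesis by (simp add: tau_step_eq_cohort_contrast)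
qed

lemma tau_step_fitted:
  assumes omega: "omega_tilde A \<pi> \<theta> a \<in> affine_weights {j\<in>A. enat a < j} \<theta> (\<theta> (enat a))"
    and lambda: "lambda_tilde \<psi> (a + k) \<in> affine_weights {1..<a + k} \<psi> (\<psi> (a + k))"
  shows "tau_step A \<pi> \<theta> \<psi> (fitted \<theta> \<psi> \<alpha> \<beta> \<phi> \<nu>) a k = 0"
proof -
  define J where "J = {j\<in>A. enat a < j}"
  define \<omega> where "\<omega> = omega_tilde A \<pi> \<theta> a"
  define lam where "lam = lambda_tilde \<psi> (a + k)"
  define P where "P = \<alpha> (enat a) - (\<Sum>j\<in>J. \<omega> j * \<alpha> j)"
  define Q where "Q = \<nu> (enat a) - (\<Sum>j\<in>J. \<omega> j *\<^sub>R \<nu> j)"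
  txt \<open>Since \<open>\<omega>\<close> reproduces \<open>1\<close> and \<open>\<theta> a\<close>, the period effects \<open>\<beta> t + \<theta> \<bullet> \<phi> t\<close> cancel.\<close>
  have contrast: "cohort_contrast A \<pi> \<theta> (fitted \<theta> \<psi> \<alpha> \<beta> \<phi> \<nu>) a t = P + Q \<bullet> \<psi> t" for t
  proof -
    have "(\<Sum>j\<in>J. \<omega> j * fitted \<theta> \<psi> \<alpha> \<beta> \<phi> \<nu> j t)
        = (\<Sum>j\<in>J. \<omega> j * \<alpha> j) + (\<Sum>j\<in>J. \<omega> j) * \<beta> t + (\<Sum>j\<in>J. \<omega> j *\<^sub>R \<theta> j) \<bullet> \<phi> t
          + (\<Sum>j\<in>J. \<omega> j *\<^sub>R \<nu> j) \<bullet> \<psi> t"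
      by (simp add: fitted_def sum.distrib sum_distrib_left sum_distrib_right inner_sum_left algebra_simps)
    also have "\<dots> = (\<Sum>j\<in>J. \<omega> j * \<alpha> j) + \<beta> t + \<theta> (enat a) \<bullet> \<phi> t + (\<Sum>j\<in>J. \<omega> j *\<^sub>R \<nu> j) \<bullet> \<psi> t"
      using omega by (simp add: affine_weights_def J_def \<omega>_def)
    finally show ?thesis
      by (simp add: cohort_contrast_def fitted_def P_def Q_def inner_diff_left J_def \<omega>_def)
  qed
  have "(\<Sum>l\<in>{1..<a + k}. lam l * (P + Q \<bullet> \<psi> l))
      = (\<Sum>l\<in>{1..<a + k}. lam l) * P + Q \<bullet> (\<Sum>l\<in>{1..<a + k}. lam l *\<^sub>R \<psi> l)"
    by (simp add: sum.distrib sum_distrib_left inner_sum_right algebra_simps)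
  also have "\<dots> = P + Q \<bullet> \<psi> (a + k)"
    using lambda by (simp add: affine_weights_def lam_def)
  finally show ?thesis
    by (simp add: tau_step_eq_cohort_contrast contrast lam_def)
qed

lemma row_lambda_average_eq_0:
  fixes f :: "nat \<Rightarrow> real"
  assumes s: "1 \<le> s" "s \<le> T" and late: "\<And>t. t \<in> {s..T} \<Longrightarrow> f t = 0"
    and orth: "(\<Sum>t=1..T. f t * (b + c \<bullet> \<psi> t)) = 0"
    and lam: "\<forall>l\<in>{1..<s}. lam l = b + c \<bullet> \<psi> l"
  shows "(\<Sum>l\<in>{1..<s}. lam l * f l) = 0"
proof -
  have "(\<Sum>l\<in>{1..<s}. lam l * f l) = (\<Sum>t\<in>{1..<s}. f t * (b + c \<bullet> \<psi> t))"
    using lam by (intro sum.cong refl) simp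
  also have "\<dots> = (\<Sum>t=1..T. f t * (b + c \<bullet> \<psi> t))"
    using late s by (intro sum.mono_neutral_left) auto
  finally show ?thesis using orth by simp
qed

lemma cohort_contrast_eq_sum_earlier_cohorts:
  fixes e :: "enat \<Rightarrow> nat \<Rightarrow> real"
  assumes fin: "finite A" and a: "enat a \<in> A"
    and period_orth: "(\<Sum>b\<in>A. \<pi> b * e b t * (u0 + u \<bullet> \<theta> b)) = 0"
    and omega: "\<forall>j\<in>{j\<in>A. enat a < j}. omega_tilde A \<pi> \<theta> a j = \<pi> j * (u0 + u \<bullet> \<theta> j)"
  shows "cohort_contrast A \<pi> \<theta> e a t
    = (\<Sum>b\<in>{b\<in>A. b \<le> enat a}. (of_bool (b = enat a) + \<pi> b * (u0 + u \<bullet> \<theta> b)) * e b t)"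
proof -
  define J where "J = {j\<in>A. enat a < j}"
  define K where "K = {b\<in>A. b \<le> enat a}"
  have JK: "A = J \<union> K" "J \<inter> K = {}" "finite J" "finite K"
    using fin by (auto simp: J_def K_def not_less)
  have "(\<Sum>j\<in>J. omega_tilde A \<pi> \<theta> a j * e j t) = (\<Sum>j\<in>J. \<pi> j * e j t * (u0 + u \<bullet> \<theta> j))"
    using omega by (intro sum.cong refl) (simp add: J_def)
  also have "\<dots> = - (\<Sum>b\<in>K. \<pi> b * e b t * (u0 + u \<bullet> \<theta> b))"
    using period_orth unfolding JK(1) sum.union_disjoint[OF JK(3,4,2)] by linarith
  finally have "(\<Sum>j\<in>J. omega_tilde A \<pi> \<theta> a j * e j t) = - (\<Sum>b\<in>K. \<pi> b * e b t * (u0 + u \<bullet> \<theta> b))" .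
  moreover have "e (enat a) t = (\<Sum>b\<in>K. of_bool (b = enat a) * e b t)"
  proof -
    have "K \<inter> {b. b = enat a} = {enat a}" using a by (auto simp: K_def)
    thus ?thesis using JK(4) by simp
  qed
  moreover have "(\<Sum>b\<in>K. (of_bool (b = enat a) + \<pi> b * (u0 + u \<bullet> \<theta> b)) * e b t)
      = (\<Sum>b\<in>K. of_bool (b = enat a) * e b t) + (\<Sum>b\<in>K. \<pi> b * e b t * (u0 + u \<bullet> \<theta> b))"
    by (simp add: sum.distrib[symmetric] algebra_simps)
  ultimately show ?thesis by (simp add: cohort_contrast_def J_def K_def)
qed

lemma tau_step_residual:
  fixes e :: "enat \<Rightarrow> nat \<Rightarrow> real"
  assumes fin: "finite A" and a: "enat a \<in> A" and s: "1 \<le> a + k" "a + k \<le> T"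
    and treated: "\<And>b t. b \<in> A \<Longrightarrow> t \<in> {1..T} \<Longrightarrow> b \<le> enat t \<Longrightarrow> e b t = 0"
    and period_orth: "\<And>t. t \<in> {1..T} \<Longrightarrow> (\<Sum>b\<in>A. \<pi> b * e b t * (u0 + u \<bullet> \<theta> b)) = 0"
    and cohort_orth: "\<And>b. b \<in> A \<Longrightarrow> (\<Sum>t=1..T. e b t * (v0 + v \<bullet> \<psi> t)) = 0"
    and omega: "\<forall>j\<in>{j\<in>A. enat a < j}. omega_tilde A \<pi> \<theta> a j = \<pi> j * (u0 + u \<bullet> \<theta> j)"
    and lambda: "\<forall>l\<in>{1..<a + k}. lambda_tilde \<psi> (a + k) l = v0 + v \<bullet> \<psi> l"
  shows "tau_step A \<pi> \<theta> \<psi> e a k = 0"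
proof -
  define s where "s = a + k"
  define K where "K = {b\<in>A. b \<le> enat a}"
  define w where "w b = of_bool (b = enat a) + \<pi> b * (u0 + u \<bullet> \<theta> b)" for b
  define lam where "lam = lambda_tilde \<psi> s"
  have row: "e b s - (\<Sum>l\<in>{1..<s}. lam l * e b l) = 0" if "b \<in> K" for b
  proof -
    have b: "b \<in> A" "b \<le> enat a" using that by (auto simp: K_def)
    have late: "e b t = 0" if "t \<in> {s..T}" for t
    proof -
      have "b \<le> enat t" using b(2) that by (auto simp: s_def intro: order_trans)
      with that s show ?thesis using treated[OF b(1)] by (simp add: s_def)
    qed
    have "(\<Sum>l\<in>{1..<s}. lam l * e b l) = 0"
    proof (rule row_lambda_average_eq_0[where f = "e b" and b = v0 and c = v and \<psi> = \<psi>])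
      show "1 \<le> s" and "s \<le> T" using s by (simp_all add: s_def)
    qed (use late cohort_orth[OF b(1)] lambda in \<open>simp_all add: s_def lam_def\<close>)
    thus ?thesis using late[of s] s by (simp add: s_def)
  qed
  have "(\<Sum>l\<in>{1..<s}. lam l * (\<Sum>b\<in>K. w b * e b l)) = (\<Sum>l\<in>{1..<s}. \<Sum>b\<in>K. w b * (lam l * e b l))"
    by (simp add: sum_distrib_left mult.left_commute)
  also have "\<dots> = (\<Sum>b\<in>K. w b * (\<Sum>l\<in>{1..<s}. lam l * e b l))"
    by (subst sum.swap) (simp add: sum_distrib_left)
  finally have swap: "(\<Sum>l\<in>{1..<s}. lam l * (\<Sum>b\<in>K. w b * e b l)) = (\<Sum>b\<in>K. w b * (\<Sum>l\<in>{1..<s}. lam l * e b l))" .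
  have "tau_step A \<pi> \<theta> \<psi> e a k = (\<Sum>b\<in>K. w b * e b s) - (\<Sum>l\<in>{1..<s}. lam l * (\<Sum>b\<in>K. w b * e b l))"
    using cohort_contrast_eq_sum_earlier_cohorts[OF fin a period_orth omega] s
    by (simp add: tau_step_eq_cohort_contrast s_def lam_def K_def w_def)
  also have "\<dots> = (\<Sum>b\<in>K. w b * (e b s - (\<Sum>l\<in>{1..<s}. lam l * e b l)))"
    unfolding swap by (simp add: right_diff_distrib sum_subtractf)
  also have "\<dots> = 0" using row by simp
  finally show ?thesis .
qed

section \<open>Sequential OLS as a fold\<close>

definition restrict_effects :: "(enat \<Rightarrow> nat \<Rightarrow> real) \<Rightarrow> (nat \<times> nat) set \<Rightarrow> enat \<Rightarrow> nat \<Rightarrow> real" where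
  "restrict_effects \<tau> S b k = (if \<exists>m. b = enat m \<and> (m, k) \<in> S then \<tau> b k else 0)"

definition subtract_effects ::
  "(enat \<Rightarrow> nat \<Rightarrow> real) \<Rightarrow> (enat \<Rightarrow> nat \<Rightarrow> real) \<Rightarrow> (nat \<times> nat) set \<Rightarrow> enat \<Rightarrow> nat \<Rightarrow> real" where
  "subtract_effects Y \<tau> S b t = Y b t - treatment_effect (restrict_effects \<tau> S) b t"

lemma restrict_effects_insert:
  "restrict_effects \<tau> (insert (n, k) S) = (restrict_effects \<tau> S)(enat n := (restrict_effects \<tau> S (enat n))(k := \<tau> (enat n) k))"
  by (intro ext) (auto simp: restrict_effects_def)

lemma subtract_effects_insert:
  assumes "(n, k) \<notin> S"
  shows "subtract_effects Y \<tau> (insert (n, k) S) =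
    (subtract_effects Y \<tau> S)(enat n := (subtract_effects Y \<tau> S (enat n))
       (n + k := subtract_effects Y \<tau> S (enat n) (n + k) - \<tau> (enat n) k))"
proof (intro ext)
  fix b t
  consider "b = enat n" "t = n + k" | "b = enat n" "t \<noteq> n + k" | "b \<noteq> enat n" by blast
  thus "subtract_effects Y \<tau> (insert (n, k) S) b t = ((subtract_effects Y \<tau> S)(enat n := (subtract_effects Y \<tau> S (enat n))
       (n + k := subtract_effects Y \<tau> S (enat n) (n + k) - \<tau> (enat n) k))) b t"
    by cases (use assms in \<open>auto simp: subtract_effects_def treatment_effect_def restrict_effects_def\<close>)
qed

definition seq_ols_step ::
  "enat set \<Rightarrow> (enat \<Rightarrow> real) \<Rightarrow> (enat \<Rightarrow> real^'r) \<Rightarrow> (nat \<Rightarrow> real^'r)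
   \<Rightarrow> (enat \<Rightarrow> nat \<Rightarrow> real) \<times> (enat \<Rightarrow> nat \<Rightarrow> real) \<Rightarrow> nat \<times> nat
   \<Rightarrow> (enat \<Rightarrow> nat \<Rightarrow> real) \<times> (enat \<Rightarrow> nat \<Rightarrow> real)" where
  "seq_ols_step A \<pi> \<theta> \<psi> = (\<lambda>(Yc, tc) (a, k).
     let t = tau_step A \<pi> \<theta> \<psi> Yc a k in
     (Yc(enat a := (Yc (enat a))(a + k := Yc (enat a) (a + k) - t)), tc(enat a := (tc (enat a))(k := t))))"

lemma seq_ols_eq_foldl:
  "seq_ols A \<pi> Y \<theta> \<psi> t_star a_star =
     snd (foldl (seq_ols_step A \<pi> \<theta> \<psi>) (Y, \<lambda>_ _. 0) (seq_steps A t_star a_star))"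
  unfolding seq_ols_def seq_ols_step_def ..

lemma foldl_seq_ols_step:
  assumes "distinct xs" and "set xs \<inter> S = {}"
    and "\<And>n k S'. (n, k) \<in> set xs \<Longrightarrow> S \<subseteq> S' \<Longrightarrow> (n, k) \<notin> S' \<Longrightarrow>
           tau_step A \<pi> \<theta> \<psi> (subtract_effects Y \<tau> S') n k = \<tau> (enat n) k"
  shows "foldl (seq_ols_step A \<pi> \<theta> \<psi>) (subtract_effects Y \<tau> S, restrict_effects \<tau> S) xs
    = (subtract_effects Y \<tau> (S \<union> set xs), restrict_effects \<tau> (S \<union> set xs))"
  using assms
proof (induction xs arbitrary: S)
  case Nil
  thus ?case by simp
next
  case (Cons x xs)
  obtain n k where x: "x = (n, k)" by (cases x)
  have "(n, k) \<notin> S" using Cons.prems(2) x by auto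
  moreover have "tau_step A \<pi> \<theta> \<psi> (subtract_effects Y \<tau> S) n k = \<tau> (enat n) k"
    using Cons.prems(3) x calculation by auto
  ultimately have "seq_ols_step A \<pi> \<theta> \<psi> (subtract_effects Y \<tau> S, restrict_effects \<tau> S) x
      = (subtract_effects Y \<tau> (insert x S), restrict_effects \<tau> (insert x S))"
    by (simp add: x seq_ols_step_def Let_def subtract_effects_insert restrict_effects_insert)
  moreover have "foldl (seq_ols_step A \<pi> \<theta> \<psi>) (subtract_effects Y \<tau> (insert x S), restrict_effects \<tau> (insert x S)) xs
     = (subtract_effects Y \<tau> (insert x S \<union> set xs), restrict_effects \<tau> (insert x S \<union> set xs))"
    using Cons.prems by (intro Cons.IH) auto
  ultimately show ?case by simp
qed

definition seq_row :: "enat set \<Rightarrow> nat \<Rightarrow> nat \<Rightarrow> nat \<Rightarrow> (nat \<times> nat) list" where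
  "seq_row A t_star a_star k = map (\<lambda>a. (a, k)) (filter (\<lambda>a. enat a \<in> A) [t_star..<a_star - k + 1])"

definition seq_processed :: "enat set \<Rightarrow> nat \<Rightarrow> nat \<Rightarrow> nat \<Rightarrow> (nat \<times> nat) set" where
  "seq_processed A t_star a_star K = {(m, k). k < K \<and> enat m \<in> A \<and> t_star \<le> m \<and> m + k \<le> a_star}"

lemma seq_steps_eq_concat_rows:
  "seq_steps A t_star a_star = concat (map (seq_row A t_star a_star) [0..<a_star - t_star + 1])"
  unfolding seq_steps_def seq_row_def ..

section \<open>Optimality conditions and correctness of each step\<close>

lemma linear_coeff_eq_0_if_quadratic_nonneg:
  fixes B C :: real
  assumes "\<And>e. 2 * e * B \<le> e\<^sup>2 * C"
  shows "B = 0"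
proof -
  have "C \<ge> 0" using assms[of 1] assms[of "-1"] by simp
  define e where "e = B / (C + 1)"
  have e: "e * (C + 1) = B" using \<open>C \<ge> 0\<close> by (simp add: e_def)
  have "0 \<le> (e\<^sup>2 * C - 2 * e * B) * (C + 1)\<^sup>2"
    using assms[of e] by simp
  also have "\<dots> = (e * (C + 1))\<^sup>2 * C - 2 * (e * (C + 1)) * B * (C + 1)"
    by (simp add: power2_eq_square algebra_simps)
  also have "\<dots> = - (B\<^sup>2 * (C + 2))"
    unfolding e by (simp add: power2_eq_square algebra_simps)
  finally have "B\<^sup>2 * (C + 2) \<le> 0" by simp
  with \<open>C \<ge> 0\<close> show "B = 0"
    by (smt (verit) mult_pos_pos zero_less_power2)
qed

locale ols_minimizer =
  fixes A :: "enat set" and T :: nat and \<pi> :: "enat \<Rightarrow> real" and Y :: "enat \<Rightarrow> nat \<Rightarrow> real"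
    and \<theta> :: "enat \<Rightarrow> real^'r" and \<psi> :: "nat \<Rightarrow> real^'r"
    and \<alpha> :: "enat \<Rightarrow> real" and \<beta> :: "nat \<Rightarrow> real" and \<phi> :: "nat \<Rightarrow> real^'r"
    and \<nu> :: "enat \<Rightarrow> real^'r" and \<tau> :: "enat \<Rightarrow> nat \<Rightarrow> real"
  assumes cohorts: "A \<subseteq> enat ` {1..T} \<union> {\<infinity>}"
    and weights_pos: "\<forall>a\<in>A. \<pi> a > 0"
    and minimizer: "is_ols_minimizer A T \<pi> Y \<theta> \<psi> \<alpha> \<beta> \<phi> \<nu> \<tau>"
begin

abbreviation "res \<equiv> residual Y \<theta> \<psi> \<alpha> \<beta> \<phi> \<nu> \<tau>"

lemma finite_cohorts: "finite A"
  using cohorts by (rule finite_subset) auto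

lemma cohort_ge_1: "enat n \<in> A \<Longrightarrow> 1 \<le> n"
  using cohorts by auto

lemma normal_equation:
  "(\<Sum>a\<in>A. \<Sum>t=1..T. \<pi> a * res a t * (fitted \<theta> \<psi> \<alpha>' \<beta>' \<phi>' \<nu>' a t + treatment_effect \<tau>' a t)) = 0"
proof -
  define g where "g a t = fitted \<theta> \<psi> \<alpha>' \<beta>' \<phi>' \<nu>' a t + treatment_effect \<tau>' a t" for a t
  define B where "B = (\<Sum>a\<in>A. \<Sum>t=1..T. \<pi> a * res a t * g a t)"
  define C where "C = (\<Sum>a\<in>A. \<Sum>t=1..T. \<pi> a * (g a t)\<^sup>2)"
  have "2 * e * B \<le> e\<^sup>2 * C" for e
  proof -
    have "ssr A T \<pi> Y \<theta> \<psi> \<alpha> \<beta> \<phi> \<nu> \<tau>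
       \<le> ssr A T \<pi> Y \<theta> \<psi> (\<lambda>a. \<alpha> a + e * \<alpha>' a) (\<lambda>t. \<beta> t + e * \<beta>' t) (\<lambda>t. \<phi> t + e *\<^sub>R \<phi>' t)
            (\<lambda>a. \<nu> a + e *\<^sub>R \<nu>' a) (\<lambda>a h. \<tau> a h + e * \<tau>' a h)"
      using minimizer unfolding is_ols_minimizer_def by blast
    also have "\<dots> = (\<Sum>a\<in>A. \<Sum>t=1..T. \<pi> a * (res a t)\<^sup>2 - 2 * e * (\<pi> a * res a t * g a t)
                        + e\<^sup>2 * (\<pi> a * (g a t)\<^sup>2))"
      unfolding ssr_eq_sum_residual residual_perturb g_def[symmetric]
      by (intro sum.cong refl) (simp add: power2_eq_square algebra_simps)
    also have "\<dots> = ssr A T \<pi> Y \<theta> \<psi> \<alpha> \<beta> \<phi> \<nu> \<tau> - 2 * e * B + e\<^sup>2 * C"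
      by (simp add: ssr_eq_sum_residual B_def C_def sum.distrib sum_subtractf sum_distrib_left)
    finally show ?thesis by simp
  qed
  hence "B = 0" by (rule linear_coeff_eq_0_if_quadratic_nonneg)
  thus ?thesis by (simp add: B_def g_def)
qed

lemma residual_treated_eq_0:
  assumes a: "a \<in> A" and t: "t \<in> {1..T}" and treated: "a \<le> enat t"
  shows "res a t = 0"
proof -
  have "0 = (\<Sum>b\<in>A. \<Sum>t'=1..T. \<pi> b * res b t' *
      (fitted \<theta> \<psi> (\<lambda>_. 0) (\<lambda>_. 0) (\<lambda>_. 0) (\<lambda>_. 0) b t'
       + treatment_effect (\<lambda>b h. if b = a \<and> h = t - the_enat a then 1 else 0) b t'))"
    by (rule normal_equation[symmetric])
  also have "\<dots> = (\<Sum>b\<in>A. \<Sum>t'=1..T. if b = a then (if t' = t then \<pi> a * res a t else 0) else 0)"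
    by (intro sum.cong refl) (simp add: fitted_def treatment_effect_single_cell[OF treated])
  also have "\<dots> = \<pi> a * res a t"
    using a t finite_cohorts by (simp add: sum.If_cases)
  finally show ?thesis using weights_pos a by auto
qed

lemma residual_period_orthogonal:
  assumes "t0 \<in> {1..T}"
  shows "(\<Sum>a\<in>A. \<pi> a * res a t0 * (c0 + c \<bullet> \<theta> a)) = 0"
proof -
  have "0 = (\<Sum>a\<in>A. \<Sum>t=1..T. \<pi> a * res a t *
      (fitted \<theta> \<psi> (\<lambda>_. 0) (\<lambda>t. if t = t0 then c0 else 0) (\<lambda>t. if t = t0 then c else 0) (\<lambda>_. 0) a t
       + treatment_effect (\<lambda>_ _. 0) a t))"
    by (rule normal_equation[symmetric])
  also have "\<dots> = (\<Sum>a\<in>A. \<Sum>t=1..T. if t = t0 then \<pi> a * res a t0 * (c0 + c \<bullet> \<theta> a) else 0)"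
    by (intro sum.cong refl) (simp add: fitted_def treatment_effect_def inner_commute)
  also have "\<dots> = (\<Sum>a\<in>A. \<pi> a * res a t0 * (c0 + c \<bullet> \<theta> a))"
    using assms by simp
  finally show ?thesis by simp
qed

lemma residual_cohort_orthogonal:
  assumes a0: "a0 \<in> A"
  shows "(\<Sum>t=1..T. res a0 t * (c0 + c \<bullet> \<psi> t)) = 0"
proof -
  have "0 = (\<Sum>a\<in>A. \<Sum>t=1..T. \<pi> a * res a t *
      (fitted \<theta> \<psi> (\<lambda>a. if a = a0 then c0 else 0) (\<lambda>_. 0) (\<lambda>_. 0) (\<lambda>a. if a = a0 then c else 0) a t
       + treatment_effect (\<lambda>_ _. 0) a t))"
    by (rule normal_equation[symmetric])
  also have "\<dots> = (\<Sum>a\<in>A. if a = a0 then \<pi> a0 * (\<Sum>t=1..T. res a0 t * (c0 + c \<bullet> \<psi> t)) else 0)"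
    by (intro sum.cong refl) (simp add: fitted_def treatment_effect_def sum_distrib_left mult.assoc)
  also have "\<dots> = \<pi> a0 * (\<Sum>t=1..T. res a0 t * (c0 + c \<bullet> \<psi> t))"
    using a0 finite_cohorts by simp
  finally show ?thesis using weights_pos a0 by auto
qed

lemma tau_step_eq_tau:
  assumes a: "enat a \<in> A" and s: "a + k \<le> T"
    and \<theta>_hull: "\<theta> (enat a) \<in> affine hull (\<theta> ` {j\<in>A. enat a < j})"
    and \<psi>_hull: "\<psi> (a + k) \<in> affine hull (\<psi> ` {1..<a + k})"
    and Z: "\<And>b t. b \<in> insert (enat a) {j\<in>A. enat a < j} \<Longrightarrow> t \<in> {1..a + k} \<Longrightarrow>
              Z b t = fitted \<theta> \<psi> \<alpha> \<beta> \<phi> \<nu> b t + res b t + (if b = enat a \<and> t = a + k then \<tau> (enat a) k else 0)"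
  shows "tau_step A \<pi> \<theta> \<psi> Z a k = \<tau> (enat a) k"
proof -
  obtain u0 u where omega: "omega_tilde A \<pi> \<theta> a \<in> affine_weights {j\<in>A. enat a < j} \<theta> (\<theta> (enat a))"
    and omega_linear: "\<forall>j\<in>{j\<in>A. enat a < j}. omega_tilde A \<pi> \<theta> a j = \<pi> j * (u0 + u \<bullet> \<theta> j)"
    using omega_tilde_linear_form[OF finite_cohorts weights_pos \<theta>_hull] .
  obtain v0 v where lambda: "lambda_tilde \<psi> (a + k) \<in> affine_weights {1..<a + k} \<psi> (\<psi> (a + k))"
    and lambda_linear: "\<forall>l\<in>{1..<a + k}. lambda_tilde \<psi> (a + k) l = v0 + v \<bullet> \<psi> l"
    using lambda_tilde_linear_form[OF \<psi>_hull] .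
  have "1 \<le> a + k" using cohort_ge_1[OF a] by simp
  hence "tau_step A \<pi> \<theta> \<psi> Z a k = tau_step A \<pi> \<theta> \<psi> (\<lambda>b t. fitted \<theta> \<psi> \<alpha> \<beta> \<phi> \<nu> b t + res b t
      + (if b = enat a \<and> t = a + k then \<tau> (enat a) k else 0)) a k"
    using Z by (rule tau_step_cong)
  also have "\<dots> = tau_step A \<pi> \<theta> \<psi> (fitted \<theta> \<psi> \<alpha> \<beta> \<phi> \<nu>) a k + tau_step A \<pi> \<theta> \<psi> res a k + \<tau> (enat a) k"
    by (simp add: tau_step_add tau_step_single_cell)
  also have "tau_step A \<pi> \<theta> \<psi> (fitted \<theta> \<psi> \<alpha> \<beta> \<phi> \<nu>) a k = 0"
    using omega lambda by (rule tau_step_fitted)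
  also have "tau_step A \<pi> \<theta> \<psi> res a k = 0"
    using finite_cohorts a \<open>1 \<le> a + k\<close> s residual_treated_eq_0 residual_period_orthogonal
      residual_cohort_orthogonal omega_linear lambda_linear
    by (rule tau_step_residual)
  finally show ?thesis by simp
qed

lemma subtract_effects_decomposition:
  assumes n: "enat n \<in> A" and new: "(n, k) \<notin> S"
    and processed: "\<And>m k'. enat m \<in> A \<Longrightarrow> n \<le> m \<Longrightarrow> m + k' \<le> n + k \<Longrightarrow> (m, k') \<noteq> (n, k) \<Longrightarrow> (m, k') \<in> S"
    and b: "b \<in> insert (enat n) {j\<in>A. enat n < j}" and t: "t \<le> n + k"
  shows "subtract_effects Y \<tau> S b t
    = fitted \<theta> \<psi> \<alpha> \<beta> \<phi> \<nu> b t + res b t + (if b = enat n \<and> t = n + k then \<tau> (enat n) k else 0)"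
proof -
  have "treatment_effect \<tau> b t - treatment_effect (restrict_effects \<tau> S) b t
      = (if b = enat n \<and> t = n + k then \<tau> (enat n) k else 0)"
  proof (cases b)
    case (enat m)
    have "enat m \<in> A" and "n \<le> m" using b enat n by auto
    show ?thesis
    proof (cases "m \<le> t")
      case True
      hence "(m, t - m) \<in> S \<longleftrightarrow> (m, t - m) \<noteq> (n, k)"
        using processed[of m "t - m"] \<open>enat m \<in> A\<close> \<open>n \<le> m\<close> t new by auto
      thus ?thesis using True enat by (auto simp: treatment_effect_def restrict_effects_def)
    next
      case False
      thus ?thesis using enat \<open>n \<le> m\<close> by (auto simp: treatment_effect_def)
    qed
  qed (simp add: treatment_effect_def)
  thus ?thesis by (simp add: subtract_effects_def residual_def)
qed

lemma tau_step_subtract_effects: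
  assumes "a_star \<le> T"
    and \<theta>_span: "affine hull (\<theta> ` {j\<in>A. enat a_star < j}) = UNIV"
    and \<psi>_span: "affine hull (\<psi> ` {1..<t_star}) = UNIV"
    and n: "enat n \<in> A" "t_star \<le> n" "n + k \<le> a_star"
    and new: "(n, k) \<notin> S"
    and processed: "\<And>m k'. enat m \<in> A \<Longrightarrow> n \<le> m \<Longrightarrow> m + k' \<le> n + k \<Longrightarrow> (m, k') \<noteq> (n, k) \<Longrightarrow> (m, k') \<in> S"
  shows "tau_step A \<pi> \<theta> \<psi> (subtract_effects Y \<tau> S) n k = \<tau> (enat n) k"
proof (rule tau_step_eq_tau)
  show "enat n \<in> A" and "n + k \<le> T" using n \<open>a_star \<le> T\<close> by simp_all
  have later: "{j\<in>A. enat a_star < j} \<subseteq> {j\<in>A. enat n < j}"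
    using n by (auto intro: order_le_less_trans[of "enat n" "enat a_star"])
  show "\<theta> (enat n) \<in> affine hull (\<theta> ` {j\<in>A. enat n < j})"
    using hull_mono[OF image_mono[OF later], of affine \<theta>] \<theta>_span by auto
  have earlier: "{1..<t_star} \<subseteq> {1..<n + k}" using n by auto
  show "\<psi> (n + k) \<in> affine hull (\<psi> ` {1..<n + k})"
    using hull_mono[OF image_mono[OF earlier], of affine \<psi>] \<psi>_span by auto
  fix b t assume "b \<in> insert (enat n) {j\<in>A. enat n < j}" and "t \<in> {1..n + k}"
  thus "subtract_effects Y \<tau> S b t
      = fitted \<theta> \<psi> \<alpha> \<beta> \<phi> \<nu> b t + res b t + (if b = enat n \<and> t = n + k then \<tau> (enat n) k else 0)"
    by (intro subtract_effects_decomposition[OF n(1) new processed]) auto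
qed

lemma set_seq_row:
  "set (seq_row A t_star a_star K) = {(n, K) | n. enat n \<in> A \<and> t_star \<le> n \<and> n + K \<le> a_star}"
proof -
  have "n < a_star - K + 1 \<longleftrightarrow> n + K \<le> a_star" if "enat n \<in> A" for n
    using cohort_ge_1[OF that] by linarith
  thus ?thesis by (auto simp: seq_row_def simp del: upt_Suc)
qed

lemma foldl_seq_rows:
  assumes "a_star \<le> T"
    and "affine hull (\<theta> ` {j\<in>A. enat a_star < j}) = UNIV"
    and "affine hull (\<psi> ` {1..<t_star}) = UNIV"
  shows "foldl (seq_ols_step A \<pi> \<theta> \<psi>) (Y, \<lambda>_ _. 0) (concat (map (seq_row A t_star a_star) [0..<K]))
    = (subtract_effects Y \<tau> (seq_processed A t_star a_star K), restrict_effects \<tau> (seq_processed A t_star a_star K))"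
proof (induction K)
  case 0
  have "subtract_effects Y \<tau> {} = Y" and "restrict_effects \<tau> {} = (\<lambda>_ _. 0)"
    by (simp_all add: fun_eq_iff subtract_effects_def treatment_effect_def restrict_effects_def)
  thus ?case by (simp add: seq_processed_def)
next
  case (Suc K)
  let ?S = "seq_processed A t_star a_star K" and ?row = "seq_row A t_star a_star K"
  have "foldl (seq_ols_step A \<pi> \<theta> \<psi>) (subtract_effects Y \<tau> ?S, restrict_effects \<tau> ?S) ?row
      = (subtract_effects Y \<tau> (?S \<union> set ?row), restrict_effects \<tau> (?S \<union> set ?row))"
  proof (rule foldl_seq_ols_step)
    show "distinct ?row" by (simp add: seq_row_def distinct_map inj_on_def)
    show "set ?row \<inter> ?S = {}" by (auto simp: set_seq_row seq_processed_def)
    fix n k S' assume nk: "(n, k) \<in> set ?row" and "?S \<subseteq> S'" and "(n, k) \<notin> S'"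
    from nk have k: "k = K" and n: "enat n \<in> A" "t_star \<le> n" "n + k \<le> a_star"
      by (auto simp: set_seq_row)
    moreover have "(m, k') \<in> S'" if "enat m \<in> A" "n \<le> m" "m + k' \<le> n + k" "(m, k') \<noteq> (n, k)" for m k'
      using that n k \<open>?S \<subseteq> S'\<close> by (auto simp: seq_processed_def)
    ultimately show "tau_step A \<pi> \<theta> \<psi> (subtract_effects Y \<tau> S') n k = \<tau> (enat n) k"
      using tau_step_subtract_effects[OF assms n(1,2)] \<open>(n, k) \<notin> S'\<close> by blast
  qed
  moreover have "?S \<union> set ?row = seq_processed A t_star a_star (Suc K)"
    by (auto simp: seq_processed_def set_seq_row)
  ultimately show ?case using Suc.IH by simp
qed

lemma seq_ols_eq_restrict_effects:
  assumes "a_star \<le> T"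
    and "affine hull (\<theta> ` {j\<in>A. enat a_star < j}) = UNIV"
    and "affine hull (\<psi> ` {1..<t_star}) = UNIV"
  shows "seq_ols A \<pi> Y \<theta> \<psi> t_star a_star = restrict_effects \<tau> (seq_processed A t_star a_star (a_star - t_star + 1))"
  by (simp add: seq_ols_eq_foldl seq_steps_eq_concat_rows foldl_seq_rows[OF assms] del: upt_Suc)

end

theorem proposition1:
  fixes A :: "enat set" and T :: nat and \<pi> :: "enat \<Rightarrow> real"
    and Y :: "enat \<Rightarrow> nat \<Rightarrow> real"
    and \<theta> :: "enat \<Rightarrow> real^'r" and \<psi> :: "nat \<Rightarrow> real^'r"
    and t_star a_star :: nat
  assumes "A \<subseteq> enat ` {1..T} \<union> {\<infinity>}"
    and "\<forall>a\<in>A. \<pi> a > 0"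
    and "t_star \<le> a_star" and "a_star \<le> T"
    and "affine hull (\<theta> ` {j\<in>A. enat a_star < j}) = UNIV"
    and "affine hull (\<psi> ` {1..<t_star}) = UNIV"
  shows "\<forall>\<alpha> \<beta> \<phi> \<nu> \<tau>. is_ols_minimizer A T \<pi> Y \<theta> \<psi> \<alpha> \<beta> \<phi> \<nu> \<tau> \<longrightarrow>
           (\<forall>a k. enat a \<in> A \<and> t_star \<le> a \<and> a + k \<le> a_star \<longrightarrow>
              \<tau> (enat a) k = seq_ols A \<pi> Y \<theta> \<psi> t_star a_star (enat a) k)"
proof (intro allI impI)
  fix \<alpha> \<beta> \<phi> \<nu> \<tau> a k
  assume min: "is_ols_minimizer A T \<pi> Y \<theta> \<psi> \<alpha> \<beta> \<phi> \<nu> \<tau>"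
    and ak: "enat a \<in> A \<and> t_star \<le> a \<and> a + k \<le> a_star"
  interpret ols_minimizer A T \<pi> Y \<theta> \<psi> \<alpha> \<beta> \<phi> \<nu> \<tau>
    using assms(1,2) min by unfold_locales
  have "(a, k) \<in> seq_processed A t_star a_star (a_star - t_star + 1)"
    using ak by (auto simp: seq_processed_def)
  thus "\<tau> (enat a) k = seq_ols A \<pi> Y \<theta> \<psi> t_star a_star (enat a) k"
    by (simp add: seq_ols_eq_restrict_effects[OF assms(4-6)] restrict_effects_def)
qed

end
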